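(* Fix an integer $r\ge1$ and let $F(x,y)=x^{2r+1}+y^{2r+1}+\sum_{j=1}^r c(r,j)x^{2r+1-2j}y^j$, where $c(r,j)=\frac{2r+1}{j}\binom{2r-j}{j-1}$. Let $H(x,y)=\sum_{j=1}^r\lambda_jx^{2r+1-2j}y^j$ with $0\le\lambda_j<c(r,j)$ for each $j$, and put $G=F-H+FH$. Then $N(G)=N(F)+N(FH)$.
   Context: $N(q)$ denotes the number of distinct monomials with nonzero coefficient in the polynomial $q$. *)

theory Defs
  imports "HOL-Computational_Algebra.Polynomial"
begin

text \<open>Bivariate real polynomials in x, y are represented as real poly poly:
  outer variable y, inner variable x.  The monomial x^a y^b with coefficient c
  is monom (monom c a) b.\<close>

definition bimonom :: "real \<Rightarrow> nat \<Rightarrow> nat \<Rightarrow> real poly poly" where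
  "bimonom c a b = monom (monom c a) b"

definition N :: "real poly poly \<Rightarrow> nat" where
  "N q = card {(i, j). coeff (coeff q j) i \<noteq> 0}"

definition cc :: "nat \<Rightarrow> nat \<Rightarrow> real" where
  "cc r j = (real (2*r+1) / real j) * real ((2*r - j) choose (j - 1))"

definition Fpoly :: "nat \<Rightarrow> real poly poly" where
  "Fpoly r = bimonom 1 (2*r+1) 0 + bimonom 1 0 (2*r+1)
     + (\<Sum>j=1..r. bimonom (cc r j) (2*r+1-2*j) j)"

definition Hpoly :: "nat \<Rightarrow> (nat \<Rightarrow> real) \<Rightarrow> real poly poly" where
  "Hpoly r lam = (\<Sum>j=1..r. bimonom (lam j) (2*r+1-2*j) j)"

end

theory Submission
  imports Defs
begin

text \<open>Give x^i y^j the weight i + 2j. Every monomial of F and of H has weight 2r + 1, except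
  y^(2r+1), which has weight 4r + 2 but no factor x; every monomial of H has a factor x.
  Hence every monomial of FH has a factor x and weight at least 4r + 2, so FH shares no
  monomial with F. Since c(r,j) > 0 and \<lambda>_j \<noteq> c(r,j), subtracting H cancels no monomial of
  F, so G = (F - H) + FH is a sum of two polynomials with disjoint supports, the first
  having the support of F.\<close>

definition support :: "'a::zero poly poly \<Rightarrow> (nat \<times> nat) set" where
  "support q = {(i, j). coeff (coeff q j) i \<noteq> 0}"

lemma N_eq_card_support: "N q = card (support q)"
  by (simp add: N_def support_def)

lemma finite_support: "finite (support q)"
proof (rule finite_subset)
  show "support q \<subseteq> (\<Union>j\<le>degree q. {..degree (coeff q j)} \<times> {j})"
  proof clarify
    fix i j assume "(i, j) \<in> support q"
    then have "coeff (coeff q j) i \<noteq> 0" and "coeff q j \<noteq> 0"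
      by (auto simp: support_def)
    then show "(i, j) \<in> (\<Union>j\<le>degree q. {..degree (coeff q j)} \<times> {j})"
      by (blast intro: le_degree)
  qed
qed auto

lemma support_add_disjoint:
  fixes p q :: "'a::comm_monoid_add poly poly"
  assumes "support p \<inter> support q = {}"
  shows "support (p + q) = support p \<union> support q"
proof -
  have "coeff (coeff p j) i = 0 \<or> coeff (coeff q j) i = 0" for i j
    using assms by (auto simp: support_def)
  then show ?thesis
    by (auto simp: support_def) (metis add.left_neutral add.right_neutral)+
qed

lemma N_add_disjoint:
  assumes "support p \<inter> support q = {}"
  shows "N (p + q) = N p + N q"
  using assms by (simp add: N_eq_card_support support_add_disjoint card_Un_disjoint finite_support)

lemma support_mult_subset:
  fixes p q :: "'a::comm_semiring_0 poly poly"
  shows "support (p * q) \<subseteq>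
    {(i1 + i2, j1 + j2) | i1 j1 i2 j2. (i1, j1) \<in> support p \<and> (i2, j2) \<in> support q}"
proof clarify
  fix i j assume "(i, j) \<in> support (p * q)"
  then have "(\<Sum>j1\<le>j. \<Sum>i1\<le>i. coeff (coeff p j1) i1 * coeff (coeff q (j - j1)) (i - i1)) \<noteq> 0"
    by (simp add: support_def coeff_mult coeff_sum)
  then obtain j1 i1 where "j1 \<le> j" "i1 \<le> i"
    and "coeff (coeff p j1) i1 * coeff (coeff q (j - j1)) (i - i1) \<noteq> 0"
    by (metis (no_types, lifting) atMost_iff sum.neutral)
  then have "(i1, j1) \<in> support p" "(i - i1, j - j1) \<in> support q" "i = i1 + (i - i1)" "j = j1 + (j - j1)"
    by (auto simp: support_def)
  then show "\<exists>i1 j1 i2 j2. (i, j) = (i1 + i2, j1 + j2) \<and> (i1, j1) \<in> support p \<and> (i2, j2) \<in> support q"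
    by blast
qed

lemma coeff_coeff_bimonom:
  "coeff (coeff (bimonom c a b) j) i = (if i = a \<and> j = b then c else 0)"
  by (simp add: bimonom_def coeff_monom)

lemma coeff_coeff_diagonal_sum:
  "coeff (coeff (\<Sum>k=1..r. bimonom (c k) (2*r+1-2*k) k) j) i
     = (if j \<in> {1..r} \<and> i = 2*r+1-2*j then c j else 0)"
proof -
  have "coeff (coeff (\<Sum>k=1..r. bimonom (c k) (2*r+1-2*k) k) j) i
      = (\<Sum>k=1..r. if j = k then (if i = 2*r+1-2*j then c j else 0) else 0)"
    unfolding coeff_sum coeff_coeff_bimonom by (intro sum.cong) auto
  then show ?thesis
    by simp
qed

lemma coeff_coeff_Fpoly:
  "coeff (coeff (Fpoly r) j) i =
     (if (i, j) = (2*r+1, 0) \<or> (i, j) = (0, 2*r+1) then 1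
      else if j \<in> {1..r} \<and> i = 2*r+1-2*j then cc r j else 0)"
  unfolding Fpoly_def coeff_add coeff_coeff_bimonom coeff_coeff_diagonal_sum by auto

lemma coeff_coeff_Hpoly:
  "coeff (coeff (Hpoly r lam) j) i = (if j \<in> {1..r} \<and> i = 2*r+1-2*j then lam j else 0)"
  unfolding Hpoly_def by (rule coeff_coeff_diagonal_sum)

lemma cc_pos: "j \<in> {1..r} \<Longrightarrow> cc r j > 0"
  unfolding cc_def by (auto intro!: mult_pos_pos divide_pos_pos)

lemma support_Fpoly: "support (Fpoly r) \<subseteq> {(i, j). i + 2*j = 2*r+1} \<union> {(0, 2*r+1)}"
  by (auto simp: support_def coeff_coeff_Fpoly split: if_splits)

lemma support_Hpoly: "support (Hpoly r lam) \<subseteq> {(i, j). 1 \<le> i \<and> i + 2*j = 2*r+1}"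
  by (auto simp: support_def coeff_coeff_Hpoly split: if_splits)

lemma support_Fpoly_diff_Hpoly:
  assumes "\<And>j. j \<in> {1..r} \<Longrightarrow> lam j \<noteq> cc r j"
  shows "support (Fpoly r - Hpoly r lam) = support (Fpoly r)"
  using assms cc_pos[of _ r]
  by (force simp: support_def coeff_coeff_Fpoly coeff_coeff_Hpoly)

lemma support_Fpoly_mult_Hpoly:
  "support (Fpoly r * Hpoly r lam) \<subseteq> {(i, j). 1 \<le> i \<and> 4*r+2 \<le> i + 2*j}"
proof -
  have "2*r+1 \<le> i + 2*j" if "(i, j) \<in> support (Fpoly r)" for i j
    using that support_Fpoly by fastforce
  then show ?thesis
    using support_mult_subset[of "Fpoly r" "Hpoly r lam"] support_Hpoly[of r lam] by fastforce
qed

lemma support_Fpoly_disjoint_mult: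
  "support (Fpoly r) \<inter> support (Fpoly r * Hpoly r lam) = {}"
  using support_Fpoly[of r] support_Fpoly_mult_Hpoly[of r lam] by fastforce

theorem proposition2p5:
  fixes r :: nat and lam :: "nat \<Rightarrow> real"
  assumes "r \<ge> 1"
    and "\<And>j. j \<in> {1..r} \<Longrightarrow> 0 \<le> lam j \<and> lam j < cc r j"
  shows "N (Fpoly r - Hpoly r lam + Fpoly r * Hpoly r lam)
         = N (Fpoly r) + N (Fpoly r * Hpoly r lam)"
proof -
  have diff: "support (Fpoly r - Hpoly r lam) = support (Fpoly r)"
    using assms(2) by (intro support_Fpoly_diff_Hpoly) force
  have "N (Fpoly r - Hpoly r lam + Fpoly r * Hpoly r lam)
      = N (Fpoly r - Hpoly r lam) + N (Fpoly r * Hpoly r lam)"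
    using support_Fpoly_disjoint_mult by (intro N_add_disjoint) (simp add: diff)
  then show ?thesis
    by (simp add: N_eq_card_support diff)
qed

end
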